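(* Let $n=2k+1$ be odd and let $B$ be an $n\times n$ ASM. Then there exist $n\times n$ permutation matrices $P_1,\ldots,P_k,P_{k+2},\ldots,P_n$ such that $[P_1,\ldots,P_k,B,P_{k+2},\ldots,P_n]$ (with $B$ as the $(k+1)$-st horizontal plane) is an $n\times n\times n$ ASHM.
   Context: An $n\times n$ alternating sign matrix (ASM) is an $n\times n$ matrix with entries in $\{0,1,-1\}$ such that in every row and column the nonzeros alternate in sign, beginning and ending with $+1$. An $n\times n\times n$ hypermatrix $[A_1,\ldots,A_n]$ ($A_s$ the horizontal planes) is an ASHM if all entries are in $\{0,\pm1\}$ and in every line (obtained by fixing two of the three indices) the nonzeros alternate in sign beginning and ending with $+1$. *)

theory Defs
  imports Main
begin

text \<open>An n x n matrix is represented as a function nat => nat => int, with only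
  entries at indices i, j < n relevant (0-based indexing).
  An n x n x n hypermatrix [A_1,...,A_n] is represented as H :: nat => nat => nat => int,
  where H s i j is entry (i,j) of the horizontal plane A_(s+1).\<close>

definition alt_sign_list :: "int list \<Rightarrow> bool" where
  "alt_sign_list xs \<longleftrightarrow>
     set xs \<subseteq> {0, 1, -1} \<and>
     (let ys = filter (\<lambda>x. x \<noteq> 0) xs in
        ys \<noteq> [] \<and> hd ys = 1 \<and> last ys = 1 \<and>
        (\<forall>i. Suc i < length ys \<longrightarrow> ys ! Suc i = - (ys ! i)))"

definition is_ASM :: "nat \<Rightarrow> (nat \<Rightarrow> nat \<Rightarrow> int) \<Rightarrow> bool" where
  "is_ASM n A \<longleftrightarrow>
     (\<forall>i<n. alt_sign_list (map (\<lambda>j. A i j) [0..<n])) \<and>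
     (\<forall>j<n. alt_sign_list (map (\<lambda>i. A i j) [0..<n]))"

definition is_perm_matrix :: "nat \<Rightarrow> (nat \<Rightarrow> nat \<Rightarrow> int) \<Rightarrow> bool" where
  "is_perm_matrix n P \<longleftrightarrow>
     (\<exists>\<sigma>. bij_betw \<sigma> {..<n} {..<n} \<and>
          (\<forall>i<n. \<forall>j<n. P i j = (if \<sigma> i = j then 1 else 0)))"

definition is_ASHM :: "nat \<Rightarrow> (nat \<Rightarrow> nat \<Rightarrow> nat \<Rightarrow> int) \<Rightarrow> bool" where
  "is_ASHM n H \<longleftrightarrow>
     (\<forall>s<n. \<forall>i<n. alt_sign_list (map (\<lambda>j. H s i j) [0..<n])) \<and>
     (\<forall>s<n. \<forall>j<n. alt_sign_list (map (\<lambda>i. H s i j) [0..<n])) \<and>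
     (\<forall>i<n. \<forall>j<n. alt_sign_list (map (\<lambda>s. H s i j) [0..<n]))"

end

theory Submission
  imports Defs
begin

(* Every line of an ASM of odd order n = 2k+1 has m entries -1, m+1 entries 1 and
   2(k-m) zeros.  The zeros of B form a bipartite graph between rows and columns in which every
   vertex has even degree, so they can be split so that in every row and in every column half of
   them are "lower" and half are "upper".  The 0/1 matrix L marking the -1's and the lower zeros
   then has all line sums k, and so has the matrix U marking the -1's and the upper zeros.  By
   Hall's theorem each of L and U is a sum of k permutation matrices; stacking those of L below B
   and those of U above B gives vertical lines 0...0 1 0...0 where B is 1, a single 1 above or
   below a 0 of B, and 1 -1 1 (padded with zeros) where B is -1. *)

section \<open>Hall's marriage theorem\<close>

lemma hall_condition_Diff_critical:
  assumes fin: "finite I" "\<And>i. i \<in> I \<Longrightarrow> finite (A i)"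
    and hall: "\<And>S. S \<subseteq> I \<Longrightarrow> card S \<le> card (\<Union>(A ` S))"
    and S: "S \<subseteq> I" "card (\<Union>(A ` S)) \<le> card S"
    and T: "T \<subseteq> I - S"
  shows "card T \<le> card (\<Union>i\<in>T. A i - \<Union>(A ` S))"
proof -
  have TS: "T \<union> S \<subseteq> I" using T S(1) by blast
  have "finite (\<Union>(A ` (T \<union> S)))" using TS fin finite_subset by blast
  then have "card (\<Union>i\<in>T. A i - \<Union>(A ` S)) = card (\<Union>(A ` (T \<union> S))) - card (\<Union>(A ` S))"
    by (subst card_Diff_subset[symmetric]) (auto intro: arg_cong[where f = card])
  moreover have "card T + card S = card (T \<union> S)"
    using T S(1) fin(1) by (intro card_Un_disjoint[symmetric]) (auto intro: finite_subset)
  ultimately show ?thesis using hall[OF TS] S(2) by linarith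
qed

lemma hall_condition_Diff_singleton:
  assumes fin: "finite I" "\<And>i. i \<in> I \<Longrightarrow> finite (A i)"
    and surplus: "\<And>S. S \<subseteq> I \<Longrightarrow> S \<noteq> {} \<Longrightarrow> S \<noteq> I \<Longrightarrow> card S < card (\<Union>(A ` S))"
    and T: "T \<subseteq> I - {i\<^sub>0}" "i\<^sub>0 \<in> I"
  shows "card T \<le> card (\<Union>i\<in>T. A i - {a})"
proof (cases "T = {}")
  case False
  have "finite (\<Union>(A ` T))" using T fin finite_subset by blast
  moreover have "(\<Union>i\<in>T. A i - {a}) = \<Union>(A ` T) - {a}" by blast
  ultimately have "card (\<Union>(A ` T)) - 1 \<le> card (\<Union>i\<in>T. A i - {a})"
    by (simp add: card_Diff_singleton_if)
  then show ?thesis using surplus[of T] T False by fastforce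
qed simp

lemma distinct_representatives_Un_critical:
  assumes "S \<subseteq> I" "\<forall>i\<in>S. f i \<in> A i" "inj_on f S"
    and "\<forall>i\<in>I - S. g i \<in> A i - \<Union>(A ` S)" "inj_on g (I - S)"
  shows "\<exists>h. (\<forall>i\<in>I. h i \<in> A i) \<and> inj_on h I"
proof -
  define h where "h i = (if i \<in> S then f i else g i)" for i
  have "inj_on h (S \<union> (I - S))"
    unfolding inj_on_Un using assms(2-5) by (auto simp: h_def inj_on_def)
  moreover have "S \<union> (I - S) = I" using assms(1) by blast
  moreover have "\<forall>i\<in>I. h i \<in> A i" using assms(2,4) by (simp add: h_def)
  ultimately show ?thesis by auto
qed

text \<open>Induction on the number of sets: if some proper subfamily S is critical, match S inside its
  own union and the rest outside it; otherwise every proper subfamily has a surplus, so any element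
  of any set can be used for it.\<close>

theorem hall_marriage:
  assumes "finite I" "\<And>i. i \<in> I \<Longrightarrow> finite (A i)"
    and "\<And>S. S \<subseteq> I \<Longrightarrow> card S \<le> card (\<Union>(A ` S))"
  shows "\<exists>f. (\<forall>i\<in>I. f i \<in> A i) \<and> inj_on f I"
  using assms
proof (induction "card I" arbitrary: I A rule: less_induct)
  case less
  show ?case
  proof (cases "\<exists>S. S \<subseteq> I \<and> S \<noteq> {} \<and> S \<noteq> I \<and> card (\<Union>(A ` S)) \<le> card S")
    case True
    then obtain S where S: "S \<subseteq> I" "S \<noteq> {}" "S \<noteq> I" "card (\<Union>(A ` S)) \<le> card S"
      by blast
    have finS: "finite S" using S(1) less.prems(1) by (rule finite_subset)
    have cS: "card S < card I" using S(1,3) less.prems(1) by (meson psubsetI psubset_card_mono)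
    have "card S > 0" using finS S(2) by auto
    then have cIS: "card (I - S) < card I" using cS by (simp add: card_Diff_subset[OF finS S(1)])
    obtain f1 where f1: "\<forall>i\<in>S. f1 i \<in> A i" "inj_on f1 S"
      using less.hyps[OF cS finS, of A] S(1) less.prems(2,3) by blast
    obtain f2 where f2: "\<forall>i\<in>I - S. f2 i \<in> A i - \<Union>(A ` S)" "inj_on f2 (I - S)"
      using less.hyps[OF cIS, of "\<lambda>i. A i - \<Union>(A ` S)"] less.prems(1,2)
        hall_condition_Diff_critical[OF less.prems S(1,4)] by blast
    show ?thesis using distinct_representatives_Un_critical[OF S(1) f1 f2] .
  next
    case False
    show ?thesis
    proof (cases "I = {}")
      case nonempty: False
      then obtain i\<^sub>0 where i\<^sub>0: "i\<^sub>0 \<in> I" by blast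
      then obtain a where a: "a \<in> A i\<^sub>0" using less.prems(3)[of "{i\<^sub>0}"] by fastforce
      have "card I > 0" using i\<^sub>0 less.prems(1) card_gt_0_iff by blast
      then have cI: "card (I - {i\<^sub>0}) < card I" using i\<^sub>0 less.prems(1) by simp
      have surplus: "card S < card (\<Union>(A ` S))" if "S \<subseteq> I" "S \<noteq> {}" "S \<noteq> I" for S
        using False that by (auto simp: not_le)
      have hall: "card T \<le> card (\<Union>i\<in>T. A i - {a})" if "T \<subseteq> I - {i\<^sub>0}" for T
        using hall_condition_Diff_singleton[OF less.prems(1,2) surplus that i\<^sub>0] .
      have fin: "finite (A i - {a})" if "i \<in> I - {i\<^sub>0}" for i
        using less.prems(2) that by blast
      obtain f where f: "\<forall>i\<in>I - {i\<^sub>0}. f i \<in> A i - {a}" "inj_on f (I - {i\<^sub>0})"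
        using less.hyps[OF cI finite_Diff[OF less.prems(1)], of "\<lambda>i. A i - {a}"] fin hall by blast
      have "inj_on (f(i\<^sub>0 := a)) (insert i\<^sub>0 (I - {i\<^sub>0}))" using f by (auto simp: inj_on_def)
      then show ?thesis using f a i\<^sub>0 by (intro exI[of _ "f(i\<^sub>0 := a)"]) (auto simp: insert_absorb)
    qed simp
  qed
qed

section \<open>Regular relations are sums of permutations\<close>

lemma bij_betw_lessThan_fibre:
  assumes "bij_betw \<sigma> {..<n} {..<n}" "j < n"
  shows "{i. i < n \<and> \<sigma> i = j} = {inv_into {..<n} \<sigma> j}"
  using assms bij_betw_inv_into_left[OF assms(1)] bij_betw_inv_into_right[OF assms(1)]
    bij_betwE[OF bij_betw_inv_into[OF assms(1)]] by fastforce

lemma regular_relation_perfect_matching: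
  fixes L :: "nat \<Rightarrow> nat \<Rightarrow> bool"
  assumes "r > 0"
    and rows: "\<forall>i<n. card {j. j < n \<and> L i j} = r"
    and cols: "\<forall>j<n. card {i. i < n \<and> L i j} = r"
  shows "\<exists>\<sigma>. bij_betw \<sigma> {..<n} {..<n} \<and> (\<forall>i<n. L i (\<sigma> i))"
proof -
  define A where "A i = {j. j < n \<and> L i j}" for i
  have "card S \<le> card (\<Union>(A ` S))" if S: "S \<subseteq> {..<n}" for S
  proof -
    define N where "N = \<Union>(A ` S)"
    have N: "N \<subseteq> {..<n}" by (auto simp: N_def A_def)
    then have "finite N" by (rule finite_subset) simp
    have "r * card S = (\<Sum>i\<in>S. card (A i))" using S rows by (simp add: A_def subset_iff)
    also have "\<dots> = card (Sigma S A)" using S by (simp add: A_def finite_subset)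
    also have "\<dots> \<le> card (prod.swap ` (SIGMA j:N. {i. i < n \<and> L i j}))"
      using \<open>finite N\<close> S by (intro card_mono) (auto simp: N_def A_def image_iff)
    also have "\<dots> = card (SIGMA j:N. {i. i < n \<and> L i j})"
      by (rule card_image) (simp add: swap_inj_on)
    also have "\<dots> = (\<Sum>j\<in>N. card {i. i < n \<and> L i j})" using \<open>finite N\<close> by simp
    also have "\<dots> = r * card N" using N cols by (simp add: subset_iff)
    finally show ?thesis using \<open>r > 0\<close> by (simp add: N_def)
  qed
  then obtain \<sigma> where \<sigma>: "\<forall>i<n. \<sigma> i \<in> A i" "inj_on \<sigma> {..<n}"
    using hall_marriage[of "{..<n}" A] by (auto simp: A_def)
  moreover have "\<sigma> ` {..<n} = {..<n}"
    using \<sigma> by (intro card_subset_eq) (auto simp: A_def card_image)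
  ultimately have "bij_betw \<sigma> {..<n} {..<n}" by (simp add: bij_betw_def)
  then show ?thesis using \<sigma>(1) by (auto simp: A_def)
qed

lemma regular_relation_remove_matching:
  fixes L :: "nat \<Rightarrow> nat \<Rightarrow> bool"
  assumes rows: "\<forall>i<n. card {j. j < n \<and> L i j} = Suc r"
    and cols: "\<forall>j<n. card {i. i < n \<and> L i j} = Suc r"
    and \<tau>: "bij_betw \<tau> {..<n} {..<n}" "\<forall>i<n. L i (\<tau> i)"
  shows "\<forall>i<n. card {j. j < n \<and> L i j \<and> \<tau> i \<noteq> j} = r"
    and "\<forall>j<n. card {i. i < n \<and> L i j \<and> \<tau> i \<noteq> j} = r"
proof -
  show "\<forall>i<n. card {j. j < n \<and> L i j \<and> \<tau> i \<noteq> j} = r"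
  proof (intro allI impI)
    fix i assume i: "i < n"
    have "{j. j < n \<and> L i j \<and> \<tau> i \<noteq> j} = {j. j < n \<and> L i j} - {\<tau> i}" by auto
    moreover have "\<tau> i \<in> {j. j < n \<and> L i j}" using \<tau> i by (auto dest: bij_betwE)
    ultimately show "card {j. j < n \<and> L i j \<and> \<tau> i \<noteq> j} = r" using rows i by simp
  qed
  show "\<forall>j<n. card {i. i < n \<and> L i j \<and> \<tau> i \<noteq> j} = r"
  proof (intro allI impI)
    fix j assume j: "j < n"
    obtain i\<^sub>0 where i\<^sub>0: "{i. i < n \<and> \<tau> i = j} = {i\<^sub>0}"
      using bij_betw_lessThan_fibre[OF \<tau>(1) j] by blast
    then have "{i. i < n \<and> L i j \<and> \<tau> i \<noteq> j} = {i. i < n \<and> L i j} - {i\<^sub>0}" by auto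
    moreover have "i\<^sub>0 \<in> {i. i < n \<and> L i j}" using i\<^sub>0 \<tau>(2) by auto
    ultimately show "card {i. i < n \<and> L i j \<and> \<tau> i \<noteq> j} = r" using cols j by simp
  qed
qed

lemma regular_relation_permutation_decomposition:
  fixes L :: "nat \<Rightarrow> nat \<Rightarrow> bool"
  assumes "\<forall>i<n. card {j. j < n \<and> L i j} = r"
    and "\<forall>j<n. card {i. i < n \<and> L i j} = r"
  shows "\<exists>\<sigma>. (\<forall>t<r. bij_betw (\<sigma> t) {..<n} {..<n}) \<and>
           (\<forall>i<n. \<forall>j<n. card {t. t < r \<and> \<sigma> t i = j} = (if L i j then 1 else 0))"
  using assms
proof (induction r arbitrary: L)
  case 0
  have "{j. j < n \<and> L i j} = {}" if "i < n" for i
    using "0.prems"(1)[rule_format, OF that] by (simp add: card_eq_0_iff)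
  then have "\<not> L i j" if "i < n" "j < n" for i j using that by blast
  then show ?case by auto
next
  case (Suc r)
  obtain \<tau> where \<tau>: "bij_betw \<tau> {..<n} {..<n}" "\<forall>i<n. L i (\<tau> i)"
    using regular_relation_perfect_matching[of "Suc r" n L] Suc.prems by auto
  obtain \<sigma> where \<sigma>: "\<forall>t<r. bij_betw (\<sigma> t) {..<n} {..<n}"
      "\<forall>i<n. \<forall>j<n. card {t. t < r \<and> \<sigma> t i = j} = (if L i j \<and> \<tau> i \<noteq> j then 1 else 0)"
    using Suc.IH[OF regular_relation_remove_matching[OF Suc.prems \<tau>]] by blast
  have "card {t. t < Suc r \<and> (\<sigma>(r := \<tau>)) t i = j} = (if L i j then 1 else 0)"
    if "i < n" "j < n" for i j
  proof -
    have "{t. t < Suc r \<and> (\<sigma>(r := \<tau>)) t i = j}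
          = {t. t < r \<and> \<sigma> t i = j} \<union> (if \<tau> i = j then {r} else {})"
      by (auto simp: less_Suc_eq)
    also have "card (\<dots>) = card {t. t < r \<and> \<sigma> t i = j} + (if \<tau> i = j then 1 else 0)"
      by (subst card_Un_disjoint) auto
    finally show ?thesis using \<sigma>(2) \<tau>(2) that by auto
  qed
  then show ?case using \<sigma>(1) \<tau>(1) by (intro exI[of _ "\<sigma>(r := \<tau>)"]) (auto simp: less_Suc_eq)
qed

section \<open>Alternating sign sequences\<close>

lemma alternating_list_sum_last:
  fixes ys :: "'a::ab_group_add list"
  assumes "\<forall>i. Suc i < length ys \<longrightarrow> ys ! Suc i = - (ys ! i)" and "ys \<noteq> []"
  shows "sum_list ys = (if odd (length ys) then hd ys else 0)
         \<and> last ys = (if odd (length ys) then hd ys else - hd ys)"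
  using assms
proof (induction ys)
  case (Cons y zs)
  show ?case
  proof (cases zs)
    case (Cons z zs')
    have "\<forall>i. Suc i < length zs \<longrightarrow> zs ! Suc i = - (zs ! i)"
      using "Cons.prems"(1) by (metis Suc_less_eq length_Cons nth_Cons_Suc)
    moreover have "hd zs = - y" using "Cons.prems"(1)[rule_format, of 0] Cons by simp
    ultimately show ?thesis using "Cons.IH" Cons by auto
  qed simp
qed simp

lemma sum_list_filter_nonzero:
  fixes xs :: "'a::monoid_add list"
  shows "sum_list (filter (\<lambda>x. x \<noteq> 0) xs) = sum_list xs"
  by (induction xs) auto

lemma alt_sign_list_sum:
  assumes "alt_sign_list xs"
  shows "sum_list xs = 1"
proof -
  obtain ys where ys: "ys = filter (\<lambda>x. x \<noteq> 0) xs" "ys \<noteq> []" "hd ys = 1" "last ys = 1"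
      "\<forall>i. Suc i < length ys \<longrightarrow> ys ! Suc i = - (ys ! i)"
    using assms by (auto simp: alt_sign_list_def Let_def)
  then have "sum_list ys = 1" using alternating_list_sum_last[OF ys(5,2)] by (auto split: if_splits)
  then show ?thesis using ys(1) sum_list_filter_nonzero by metis
qed

lemma filter_nonzero_zero_one:
  fixes xs :: "int list"
  assumes "set xs \<subseteq> {0, 1}"
  shows "filter (\<lambda>x. x \<noteq> 0) xs = replicate (nat (sum_list xs)) 1"
  using assms
proof (induction xs)
  case (Cons x xs)
  have "sum_list xs \<ge> 0" using Cons.prems by (intro sum_list_nonneg) auto
  then show ?case using Cons by (auto simp: nat_add_distrib)
qed simp

lemma alt_sign_list_zero_one_iff:
  assumes "set xs \<subseteq> {0, 1}"
  shows "alt_sign_list xs \<longleftrightarrow> sum_list xs = 1"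
proof
  assume "sum_list xs = 1"
  then have F: "filter (\<lambda>x. x \<noteq> 0) xs = [1]" using filter_nonzero_zero_one[OF assms] by simp
  show "alt_sign_list xs" using assms unfolding alt_sign_list_def Let_def F by auto
qed (rule alt_sign_list_sum)

lemma sum_indicator_lessThan:
  "(\<Sum>j<n. if P j then 1 else 0) = int (card {j. j < (n::nat) \<and> P j})"
proof -
  have "{j. j < n \<and> P j} = {j \<in> {..<n}. P j}" by auto
  then show ?thesis using sum.inter_filter[of "{..<n}" "\<lambda>_. 1::int" P] by simp
qed

lemma sum_list_indicator_upt:
  "sum_list (map (\<lambda>j. if P j then 1 else 0) [0..<n]) = int (card {j. j < n \<and> P j})"
  by (simp add: interv_sum_list_conv_sum_set_nat atLeast0LessThan sum_indicator_lessThan)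

lemma alt_sign_list_indicator_iff:
  "alt_sign_list (map (\<lambda>j. if P j then 1 else 0) [0..<n]) \<longleftrightarrow> card {j. j < n \<and> P j} = 1"
  by (subst alt_sign_list_zero_one_iff) (auto simp: sum_list_indicator_upt)

lemma alt_sign_list_card_zero_neg:
  fixes g :: "nat \<Rightarrow> int"
  assumes "alt_sign_list (map g [0..<n])"
  shows "card {j. j < n \<and> g j = 0} + 2 * card {j. j < n \<and> g j = -1} + 1 = n"
proof -
  have "set (map g [0..<n]) \<subseteq> {0, 1, -1}" using assms by (simp add: alt_sign_list_def)
  then have vals: "g j \<in> {0, 1, -1}" if "j < n" for j using that by (auto simp: image_subset_iff)
  have "1 = (\<Sum>j<n. g j)"
    using alt_sign_list_sum[OF assms] by (simp add: interv_sum_list_conv_sum_set_nat atLeast0LessThan)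
  also have "\<dots> = (\<Sum>j<n. (if g j = 1 then 1 else 0) - (if g j = -1 then 1 else 0))"
    using vals by (intro sum.cong) auto
  finally have signs: "1 = int (card {j. j < n \<and> g j = 1}) - int (card {j. j < n \<and> g j = -1})"
    by (simp add: sum_subtractf sum_indicator_lessThan)
  have "int n = (\<Sum>j<n. 1)" by simp
  also have "\<dots> = (\<Sum>j<n. (if g j = 1 then 1 else 0) + (if g j = 0 then 1 else 0)
                         + (if g j = -1 then 1 else 0))"
    using vals by (intro sum.cong) auto
  finally have "int n = int (card {j. j < n \<and> g j = 1}) + int (card {j. j < n \<and> g j = 0})
                        + int (card {j. j < n \<and> g j = -1})"
    by (simp only: sum.distrib sum_indicator_lessThan)
  then show ?thesis using signs by linarith
qed

lemma alt_sign_list_append_Cons: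
  assumes "set xs \<subseteq> {0, 1}" "set ys \<subseteq> {0, 1}" "b \<in> {0, 1, -1}"
    and "sum_list xs \<le> 1" "sum_list ys \<le> 1" "sum_list xs + b + sum_list ys = 1"
  shows "alt_sign_list (xs @ b # ys)"
proof -
  let ?F = "filter (\<lambda>x. x \<noteq> 0) (xs @ b # ys)"
  have "sum_list xs \<ge> 0" using assms(1) by (intro sum_list_nonneg) auto
  then have "sum_list xs = 0 \<or> sum_list xs = 1" using assms(4) by linarith
  moreover have "sum_list ys \<ge> 0" using assms(2) by (intro sum_list_nonneg) auto
  then have "sum_list ys = 0 \<or> sum_list ys = 1" using assms(5) by linarith
  ultimately consider
      "b = 1" "sum_list xs = 0" "sum_list ys = 0"
    | "b = 0" "sum_list xs = 1" "sum_list ys = 0"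
    | "b = 0" "sum_list xs = 0" "sum_list ys = 1"
    | "b = -1" "sum_list xs = 1" "sum_list ys = 1"
    using assms(3,6) by auto
  then have "?F = [1] \<or> ?F = [1, -1, 1]"
    by cases (simp_all add: filter_nonzero_zero_one[OF assms(1)] filter_nonzero_zero_one[OF assms(2)])
  then show ?thesis
  proof
    assume F: "?F = [1]"
    show ?thesis using assms(1-3) unfolding alt_sign_list_def Let_def F by auto
  next
    assume F: "?F = [1, -1, 1]"
    show ?thesis
      using assms(1-3) unfolding alt_sign_list_def Let_def F by (auto simp: less_Suc_eq nth_Cons')
  qed
qed

section \<open>Splitting a bipartite graph with even degrees\<close>

lemma finite_row: "finite E \<Longrightarrow> finite {j. (i, j) \<in> E}"
  by (rule finite_subset[of _ "snd ` E"]) force+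

lemma finite_column: "finite E \<Longrightarrow> finite {i. (i, j) \<in> E}"
  by (rule finite_subset[of _ "fst ` E"]) force+

lemma card_row_eq: "card {j. (i, j) \<in> E \<and> P (i, j)} = card {e \<in> E. fst e = i \<and> P e}"
proof -
  have "{e \<in> E. fst e = i \<and> P e} = Pair i ` {j. (i, j) \<in> E \<and> P (i, j)}" by force
  then show ?thesis by (simp add: card_image inj_on_def)
qed

lemma card_column_eq: "card {i. (i, j) \<in> E \<and> P (i, j)} = card {e \<in> E. snd e = j \<and> P e}"
proof -
  have "{e \<in> E. snd e = j \<and> P e} = (\<lambda>i. (i, j)) ` {i. (i, j) \<in> E \<and> P (i, j)}" by force
  then show ?thesis by (simp add: card_image inj_on_def)
qed

lemma card_eq_sum_row_degrees:
  assumes "finite E"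
  shows "card E = (\<Sum>i\<in>fst ` E. card {j. (i, j) \<in> E})"
proof -
  have "(SIGMA i:fst ` E. {j. (i, j) \<in> E}) = E" by force
  moreover have "card (SIGMA i:fst ` E. {j. (i, j) \<in> E}) = (\<Sum>i\<in>fst ` E. card {j. (i, j) \<in> E})"
    using assms finite_row[OF assms] by (intro card_SigmaI) auto
  ultimately show ?thesis by simp
qed

lemma card_eq_sum_column_degrees:
  assumes "finite E"
  shows "card E = (\<Sum>j\<in>snd ` E. card {i. (i, j) \<in> E})"
proof -
  have swap: "{i. (j, i) \<in> prod.swap ` E} = {i. (i, j) \<in> E}" for j by force
  have "card E = card (prod.swap ` E)" by (simp add: card_image swap_inj_on)
  also have "\<dots> = (\<Sum>j\<in>fst ` prod.swap ` E. card {i. (j, i) \<in> prod.swap ` E})"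
    using assms by (intro card_eq_sum_row_degrees) auto
  also have "\<dots> = (\<Sum>j\<in>snd ` E. card {i. (i, j) \<in> E})" by (simp add: image_image swap)
  finally show ?thesis .
qed

lemma card_le_sum_row_degrees:
  assumes "finite E" "S \<subseteq> E"
  shows "card S \<le> (\<Sum>i\<in>fst ` S. card {j. (i, j) \<in> E})"
proof -
  have "card S = (\<Sum>i\<in>fst ` S. card {j. (i, j) \<in> S})"
    using assms by (intro card_eq_sum_row_degrees) (rule finite_subset)
  also have "\<dots> \<le> (\<Sum>i\<in>fst ` S. card {j. (i, j) \<in> E})"
    using assms finite_row[OF assms(1)] by (intro sum_mono card_mono) auto
  finally show ?thesis .
qed

lemma card_le_sum_column_degrees:
  assumes "finite E" "S \<subseteq> E"
  shows "card S \<le> (\<Sum>j\<in>snd ` S. card {i. (i, j) \<in> E})"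
proof -
  have "card S = (\<Sum>j\<in>snd ` S. card {i. (i, j) \<in> S})"
    using assms by (intro card_eq_sum_column_degrees) (rule finite_subset)
  also have "\<dots> \<le> (\<Sum>j\<in>snd ` S. card {i. (i, j) \<in> E})"
    using assms finite_column[OF assms(1)] by (intro sum_mono card_mono) auto
  finally show ?thesis .
qed

lemma card_bij_betw_fibre:
  assumes "bij_betw f E T" "X \<subseteq> T" "\<And>e. e \<in> E \<Longrightarrow> f e \<in> X \<longleftrightarrow> P e"
  shows "card {e \<in> E. P e} = card X"
proof -
  have "bij_betw f {e \<in> E. P e} X"
    using assms unfolding bij_betw_def by (auto simp: inj_on_def image_iff)
  then show ?thesis by (rule bij_betw_same_card)
qed

definition row_slots :: "('a \<times> 'b) set \<Rightarrow> 'a set \<Rightarrow> ('a \<times> nat + 'b \<times> nat) set" where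
  "row_slots E I = Inl ` (SIGMA i:I. {..<card {j. (i, j) \<in> E} div 2})"

definition column_slots :: "('a \<times> 'b) set \<Rightarrow> 'b set \<Rightarrow> ('a \<times> nat + 'b \<times> nat) set" where
  "column_slots E J = Inr ` (SIGMA j:J. {..<card {i. (i, j) \<in> E} div 2})"

lemma card_row_slots_Un_column_slots:
  assumes "finite I" "finite J"
  shows "card (row_slots E I \<union> column_slots E J)
         = (\<Sum>i\<in>I. card {j. (i, j) \<in> E} div 2) + (\<Sum>j\<in>J. card {i. (i, j) \<in> E} div 2)"
  using assms unfolding row_slots_def column_slots_def
  by (subst card_Un_disjoint) (auto simp: card_image)

text \<open>By Hall's theorem every edge gets a slot of its row or of its column; the slots are exactly
  as many as the edges, so all of them get used.\<close>

lemma even_degree_slot_bijection: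
  fixes E :: "('a \<times> 'b) set"
  assumes E: "finite E"
    and even: "\<And>i. even (card {j. (i, j) \<in> E})" "\<And>j. even (card {i. (i, j) \<in> E})"
  shows "\<exists>f. bij_betw f E (row_slots E (fst ` E) \<union> column_slots E (snd ` E))
           \<and> (\<forall>e\<in>E. f e \<in> row_slots E {fst e} \<union> column_slots E {snd e})"
proof -
  define slots where "slots e = row_slots E {fst e} \<union> column_slots E {snd e}" for e
  define T where "T = row_slots E (fst ` E) \<union> column_slots E (snd ` E)"
  have rows: "(\<Sum>i\<in>I. card {j. (i, j) \<in> E}) = 2 * (\<Sum>i\<in>I. card {j. (i, j) \<in> E} div 2)" for I
    by (simp add: sum_distrib_left even)
  have cols: "(\<Sum>j\<in>J. card {i. (i, j) \<in> E}) = 2 * (\<Sum>j\<in>J. card {i. (i, j) \<in> E} div 2)" for J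
    by (simp add: sum_distrib_left even)
  have "card S \<le> card (\<Union>(slots ` S))" if "S \<subseteq> E" for S
  proof -
    have "finite S" using that E by (rule finite_subset)
    have "\<Union>(slots ` S) = row_slots E (fst ` S) \<union> column_slots E (snd ` S)"
      by (auto simp: slots_def row_slots_def column_slots_def)
    then show ?thesis
      using card_row_slots_Un_column_slots[of "fst ` S" "snd ` S" E] \<open>finite S\<close>
        card_le_sum_row_degrees[OF E that] card_le_sum_column_degrees[OF E that]
      unfolding rows cols by simp
  qed
  then obtain f where f: "\<forall>e\<in>E. f e \<in> slots e" "inj_on f E"
    using hall_marriage[of E slots] E by (auto simp: slots_def row_slots_def column_slots_def)
  have "slots e \<subseteq> T" if "e \<in> E" for e
    using that unfolding slots_def T_def row_slots_def column_slots_def by blast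
  then have "f ` E \<subseteq> T" using f(1) by blast
  moreover have "card T = card E"
    using card_row_slots_Un_column_slots[of "fst ` E" "snd ` E" E] E
      card_eq_sum_row_degrees[OF E] card_eq_sum_column_degrees[OF E]
    unfolding rows cols T_def by simp
  ultimately have "bij_betw f E T"
    using f(2) E card_subset_eq[of T "f ` E"]
    by (simp add: bij_betw_def T_def row_slots_def column_slots_def card_image)
  then show ?thesis using f(1) by (auto simp: T_def slots_def)
qed

lemma bipartite_even_degree_split:
  fixes E :: "('a \<times> 'b) set"
  assumes E: "finite E"
    and even: "\<And>i. even (card {j. (i, j) \<in> E})" "\<And>j. even (card {i. (i, j) \<in> E})"
  shows "\<exists>c. (\<forall>i. 2 * card {j. (i, j) \<in> E \<and> c (i, j)} = card {j. (i, j) \<in> E})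
           \<and> (\<forall>j. 2 * card {i. (i, j) \<in> E \<and> \<not> c (i, j)} = card {i. (i, j) \<in> E})"
proof -
  define T where "T = row_slots E (fst ` E) \<union> column_slots E (snd ` E)"
  obtain f where bij: "bij_betw f E T"
    and f: "\<forall>e\<in>E. f e \<in> row_slots E {fst e} \<union> column_slots E {snd e}"
    using even_degree_slot_bijection[OF E even] unfolding T_def by blast
  define c where "c e = isl (f e)" for e
  have "card {e \<in> E. fst e = i \<and> c e} = card (row_slots E {i})" for i
  proof (rule card_bij_betw_fibre[OF bij])
    show "row_slots E {i} \<subseteq> T"
    proof (cases "{j. (i, j) \<in> E} = {}")
      case False
      then have "i \<in> fst ` E" by force
      then show ?thesis by (auto simp: T_def row_slots_def)
    qed (auto simp: row_slots_def)
    show "f e \<in> row_slots E {i} \<longleftrightarrow> fst e = i \<and> c e" if "e \<in> E" for e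
      using f that by (auto simp: c_def row_slots_def column_slots_def)
  qed
  moreover have "card {e \<in> E. snd e = j \<and> \<not> c e} = card (column_slots E {j})" for j
  proof (rule card_bij_betw_fibre[OF bij])
    show "column_slots E {j} \<subseteq> T"
    proof (cases "{i. (i, j) \<in> E} = {}")
      case False
      then have "j \<in> snd ` E" by force
      then show ?thesis by (auto simp: T_def column_slots_def)
    qed (auto simp: column_slots_def)
    show "f e \<in> column_slots E {j} \<longleftrightarrow> snd e = j \<and> \<not> c e" if "e \<in> E" for e
      using f that by (auto simp: c_def row_slots_def column_slots_def)
  qed
  ultimately show ?thesis
    using card_row_eq[of _ E c] card_column_eq[of _ E "\<lambda>e. \<not> c e"]
    by (intro exI[of _ c]) (simp add: row_slots_def column_slots_def card_image even)
qed

section \<open>Lower and upper zeros of an ASM\<close>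

lemma alt_sign_list_card_neg_or_half_zeros:
  fixes g :: "nat \<Rightarrow> int"
  assumes "alt_sign_list (map g [0..<n])" "n = 2 * k + 1"
    and half: "2 * card {j. j < n \<and> g j = 0 \<and> P j} = card {j. j < n \<and> g j = 0}"
  shows "card {j. j < n \<and> (g j = -1 \<or> g j = 0 \<and> P j)} = k"
    and "card {j. j < n \<and> (g j = -1 \<or> g j = 0 \<and> \<not> P j)} = k"
proof -
  have card_Un: "card {j. j < n \<and> (Q j \<or> R j)} = card {j. j < n \<and> Q j} + card {j. j < n \<and> R j}"
    if "\<And>j. \<not> (Q j \<and> R j)" for Q R
  proof -
    have "{j. j < n \<and> (Q j \<or> R j)} = {j. j < n \<and> Q j} \<union> {j. j < n \<and> R j}" by auto
    then show ?thesis using that by (simp add: card_Un_disjoint disjoint_iff)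
  qed
  have "card {j. j < n \<and> g j = 0} = card {j. j < n \<and> (g j = 0 \<and> P j \<or> g j = 0 \<and> \<not> P j)}"
    by (intro arg_cong[where f = card]) auto
  also have "\<dots> = card {j. j < n \<and> g j = 0 \<and> P j} + card {j. j < n \<and> g j = 0 \<and> \<not> P j}"
    by (rule card_Un) blast
  finally have "card {j. j < n \<and> g j = 0 \<and> \<not> P j} = card {j. j < n \<and> g j = 0 \<and> P j}"
    using half by linarith
  moreover have "card {j. j < n \<and> g j = 0} + 2 * card {j. j < n \<and> g j = -1} + 1 = n"
    using assms(1) by (rule alt_sign_list_card_zero_neg)
  ultimately show "card {j. j < n \<and> (g j = -1 \<or> g j = 0 \<and> P j)} = k"
    and "card {j. j < n \<and> (g j = -1 \<or> g j = 0 \<and> \<not> P j)} = k"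
    using half assms(2) card_Un[of "\<lambda>j. g j = -1" "\<lambda>j. g j = 0 \<and> P j"]
      card_Un[of "\<lambda>j. g j = -1" "\<lambda>j. g j = 0 \<and> \<not> P j"] by auto
qed

lemma alt_sign_list_even_card_zero:
  fixes g :: "nat \<Rightarrow> int"
  assumes "alt_sign_list (map g [0..<n])" "odd n"
  shows "even (card {j. j < n \<and> g j = 0})"
  using alt_sign_list_card_zero_neg[OF assms(1)] assms(2) by presburger

lemma ASM_split_zeros:
  assumes B: "is_ASM n B" and n: "n = 2 * k + 1"
  shows "\<exists>c. (\<forall>i<n. card {j. j < n \<and> (B i j = -1 \<or> B i j = 0 \<and> c i j)} = k)
           \<and> (\<forall>j<n. card {i. i < n \<and> (B i j = -1 \<or> B i j = 0 \<and> c i j)} = k)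
           \<and> (\<forall>i<n. card {j. j < n \<and> (B i j = -1 \<or> B i j = 0 \<and> \<not> c i j)} = k)
           \<and> (\<forall>j<n. card {i. i < n \<and> (B i j = -1 \<or> B i j = 0 \<and> \<not> c i j)} = k)"
proof -
  define E where "E = {(i, j). i < n \<and> j < n \<and> B i j = 0}"
  have row: "{j. (i, j) \<in> E \<and> P j} = (if i < n then {j. j < n \<and> B i j = 0 \<and> P j} else {})"
    for i P by (auto simp: E_def)
  have col: "{i. (i, j) \<in> E \<and> P i} = (if j < n then {i. i < n \<and> B i j = 0 \<and> P i} else {})"
    for j P by (auto simp: E_def)
  have rowB: "alt_sign_list (map (B i) [0..<n])" if "i < n" for i
    using B that by (simp add: is_ASM_def)
  have colB: "alt_sign_list (map (\<lambda>i. B i j) [0..<n])" if "j < n" for j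
    using B that by (simp add: is_ASM_def)
  have "odd n" using n by simp
  have "finite E" unfolding E_def by (rule finite_subset[of _ "{..<n} \<times> {..<n}"]) auto
  moreover have "even (card {j. (i, j) \<in> E})" for i
    using row[of i "\<lambda>_. True"] alt_sign_list_even_card_zero[OF rowB \<open>odd n\<close>] by auto
  moreover have "even (card {i. (i, j) \<in> E})" for j
    using col[of j "\<lambda>_. True"] alt_sign_list_even_card_zero[OF colB \<open>odd n\<close>] by auto
  ultimately obtain c where
      c: "\<And>i. 2 * card {j. (i, j) \<in> E \<and> c (i, j)} = card {j. (i, j) \<in> E}"
         "\<And>j. 2 * card {i. (i, j) \<in> E \<and> \<not> c (i, j)} = card {i. (i, j) \<in> E}"
    using bipartite_even_degree_split[of E] by blast
  have "card {j. j < n \<and> (B i j = -1 \<or> B i j = 0 \<and> c (i, j))} = k"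
       "card {j. j < n \<and> (B i j = -1 \<or> B i j = 0 \<and> \<not> c (i, j))} = k" if "i < n" for i
    using alt_sign_list_card_neg_or_half_zeros[of "B i" n k "\<lambda>j. c (i, j)"]
      c(1)[of i] row[of i "\<lambda>j. c (i, j)"] row[of i "\<lambda>_. True"] rowB[OF that] n that
    by auto
  moreover have "card {i. i < n \<and> (B i j = -1 \<or> B i j = 0 \<and> c (i, j))} = k"
       "card {i. i < n \<and> (B i j = -1 \<or> B i j = 0 \<and> \<not> c (i, j))} = k" if "j < n" for j
    using alt_sign_list_card_neg_or_half_zeros[of "\<lambda>i. B i j" n k "\<lambda>i. \<not> c (i, j)"]
      c(2)[of j] col[of j "\<lambda>i. \<not> c (i, j)"] col[of j "\<lambda>_. True"] colB[OF that] n that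
    by auto
  ultimately show ?thesis by (intro exI[of _ "\<lambda>i j. c (i, j)"]) auto
qed

section \<open>Stacking permutation matrices around an ASM\<close>

definition perm_matrix :: "(nat \<Rightarrow> nat) \<Rightarrow> nat \<Rightarrow> nat \<Rightarrow> int" where
  "perm_matrix \<sigma> i j = (if \<sigma> i = j then 1 else 0)"

lemma is_perm_matrix_perm_matrix:
  "bij_betw \<sigma> {..<n} {..<n} \<Longrightarrow> is_perm_matrix n (perm_matrix \<sigma>)"
  unfolding is_perm_matrix_def perm_matrix_def by blast

lemma is_ASM_perm_matrix:
  assumes "bij_betw \<sigma> {..<n} {..<n}"
  shows "is_ASM n (perm_matrix \<sigma>)"
proof -
  have "{j. j < n \<and> \<sigma> i = j} = {\<sigma> i}" if "i < n" for i
    using assms that by (auto dest: bij_betwE)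
  then show ?thesis
    using bij_betw_lessThan_fibre[OF assms]
    by (simp add: is_ASM_def perm_matrix_def alt_sign_list_indicator_iff)
qed

lemma map_upt_odd:
  "map f [0..<2 * k + 1] = map f [0..<k] @ f k # map (\<lambda>t. f (t + Suc k)) [0..<k]"
proof -
  have "[0..<2 * k + 1] = [0..<k] @ [k..<k + Suc k]"
    using upt_add_eq_append[of 0 k "Suc k"] by (simp add: mult_2)
  also have "[k..<k + Suc k] = k # [Suc k..<k + Suc k]" by (rule upt_conv_Cons) simp
  also have "[Suc k..<k + Suc k] = map (\<lambda>t. t + Suc k) [0..<k]" by (rule map_add_upt[symmetric])
  finally show ?thesis by simp
qed

lemma is_ASHM_stack:
  assumes B: "is_ASM n B" and n: "n = 2 * k + 1"
    and \<sigma>: "\<forall>t<k. bij_betw (\<sigma> t) {..<n} {..<n}" and \<tau>: "\<forall>t<k. bij_betw (\<tau> t) {..<n} {..<n}"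
    and lower: "\<forall>i<n. \<forall>j<n. card {t. t < k \<and> \<sigma> t i = j}
                             = (if B i j = -1 \<or> B i j = 0 \<and> c i j then 1 else 0)"
    and upper: "\<forall>i<n. \<forall>j<n. card {t. t < k \<and> \<tau> t i = j}
                             = (if B i j = -1 \<or> B i j = 0 \<and> \<not> c i j then 1 else 0)"
  shows "is_ASHM n (\<lambda>s. if s = k then B
                         else if s < k then perm_matrix (\<sigma> s) else perm_matrix (\<tau> (s - Suc k)))"
    (is "is_ASHM n ?H")
proof -
  have planes: "is_ASM n (?H s)" if "s < n" for s
    using B \<sigma> \<tau> n that by (auto intro: is_ASM_perm_matrix)
  have "alt_sign_list (map (\<lambda>s. ?H s i j) [0..<n])" if "i < n" "j < n" for i j
  proof -
    let ?xs = "map (\<lambda>t. if \<sigma> t i = j then 1 else 0 :: int) [0..<k]"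
    let ?ys = "map (\<lambda>t. if \<tau> t i = j then 1 else 0 :: int) [0..<k]"
    have "sum_list ?xs = (if B i j = -1 \<or> B i j = 0 \<and> c i j then 1 else 0)"
      using lower that by (simp add: sum_list_indicator_upt)
    moreover have "sum_list ?ys = (if B i j = -1 \<or> B i j = 0 \<and> \<not> c i j then 1 else 0)"
      using upper that by (simp add: sum_list_indicator_upt)
    moreover have "B i j \<in> {0, 1, -1}"
    proof -
      have "set (map (B i) [0..<n]) \<subseteq> {0, 1, -1}"
        using B that by (simp add: is_ASM_def alt_sign_list_def)
      then show ?thesis using that by (auto simp: image_subset_iff)
    qed
    ultimately have "alt_sign_list (?xs @ B i j # ?ys)"
      by (intro alt_sign_list_append_Cons) auto
    moreover have "map (\<lambda>s. ?H s i j) [0..<n] = ?xs @ B i j # ?ys"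
      unfolding n map_upt_odd by (simp add: perm_matrix_def)
    ultimately show ?thesis by simp
  qed
  then show ?thesis using planes by (simp add: is_ASHM_def is_ASM_def)
qed

theorem mainTheorem17:
  fixes k n :: nat and B :: "nat \<Rightarrow> nat \<Rightarrow> int"
  assumes "n = 2 * k + 1"
    and "is_ASM n B"
  shows "\<exists>P :: nat \<Rightarrow> nat \<Rightarrow> nat \<Rightarrow> int.
           (\<forall>s<n. s \<noteq> k \<longrightarrow> is_perm_matrix n (P s)) \<and>
           is_ASHM n (\<lambda>s. if s = k then B else P s)"
proof -
  obtain c where c:
      "\<forall>i<n. card {j. j < n \<and> (B i j = -1 \<or> B i j = 0 \<and> c i j)} = k"
      "\<forall>j<n. card {i. i < n \<and> (B i j = -1 \<or> B i j = 0 \<and> c i j)} = k"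
      "\<forall>i<n. card {j. j < n \<and> (B i j = -1 \<or> B i j = 0 \<and> \<not> c i j)} = k"
      "\<forall>j<n. card {i. i < n \<and> (B i j = -1 \<or> B i j = 0 \<and> \<not> c i j)} = k"
    using ASM_split_zeros[OF assms(2,1)] by blast
  obtain \<sigma> where \<sigma>: "\<forall>t<k. bij_betw (\<sigma> t) {..<n} {..<n}"
      "\<forall>i<n. \<forall>j<n. card {t. t < k \<and> \<sigma> t i = j}
                     = (if B i j = -1 \<or> B i j = 0 \<and> c i j then 1 else 0)"
    using regular_relation_permutation_decomposition[OF c(1,2)] by blast
  obtain \<tau> where \<tau>: "\<forall>t<k. bij_betw (\<tau> t) {..<n} {..<n}"
      "\<forall>i<n. \<forall>j<n. card {t. t < k \<and> \<tau> t i = j}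
                     = (if B i j = -1 \<or> B i j = 0 \<and> \<not> c i j then 1 else 0)"
    using regular_relation_permutation_decomposition[OF c(3,4)] by blast
  define P where "P s = (if s < k then perm_matrix (\<sigma> s) else perm_matrix (\<tau> (s - Suc k)))" for s
  have "\<forall>s<n. s \<noteq> k \<longrightarrow> is_perm_matrix n (P s)"
    using \<sigma>(1) \<tau>(1) assms(1) by (auto simp: P_def intro: is_perm_matrix_perm_matrix)
  moreover have "is_ASHM n (\<lambda>s. if s = k then B else P s)"
    unfolding P_def using is_ASHM_stack[OF assms(2,1) \<sigma>(1) \<tau>(1) \<sigma>(2) \<tau>(2)] .
  ultimately show ?thesis by blast
qed

end
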